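(* Let $k\ge 0$. Let $\mathcal{T}_k$ be the set of pairs of sequences $(b_1,\dots,b_k)$, $(t_1,\dots,t_k)$ such that $\{b_1,\dots,b_k,t_1,\dots,t_k\}=\{1,2,\dots,2k\}$, $b_1>b_2>\dots>b_k$, $t_1>t_2>\dots>t_k$, and $t_i<b_i$ for every $i$. For such a pair let $w$ be the word $b_k\,t_k\,b_{k-1}\,t_{k-1}\cdots b_1\,t_1$ (a permutation of $\{1,\dots,2k\}$). Then $$\sum_{(b,t)\in\mathcal{T}_k} q^{\mathrm{inv}(w)} = q^k\,C_k(q).$$
   Context: For a word/permutation $w=w_1\cdots w_m$, $\mathrm{inv}(w)=\#\{(i,j): i<j,\ w_i>w_j\}$. A Dyck path of length $k$ is a lattice path from $(0,0)$ to $(k,k)$ with unit steps $(1,0)$ (EAST) and $(0,1)$ (NORTH) containing no point $(x,y)$ with $x>y$; its area is the number of unit squares lying below the path and completely above the diagonal $y=x$. The $q$-Catalan polynomial is $C_k(q)=\sum_{P} q^{\mathrm{area}(P)}$, the sum over all Dyck paths $P$ of length $k$; in particular $C_0(q)=1$. (Equivalently, the pairs in $\mathcal{T}_k$ are the standard fillings of a two-row array with $k$ columns, columns decreasing bottom to top, both rows decreasing left to right, and $w$ is its column reading word, read columns right to left, each bottom to top.) *)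

theory Defs
  imports Main
begin

definition inv :: "nat list \<Rightarrow> nat" where
  "inv w = card {(i, j). i < j \<and> j < length w \<and> w ! i > w ! j}"

text \<open>Lattice paths as step lists: True = NORTH (0,1), False = EAST (1,0).
  lpoint p i is the lattice point reached after the first i steps.\<close>
definition lpoint :: "bool list \<Rightarrow> nat \<Rightarrow> nat \<times> nat" where
  "lpoint p i = (length (filter Not (take i p)), length (filter id (take i p)))"

definition dyck_paths :: "nat \<Rightarrow> bool list set" where
  "dyck_paths k = {p. length p = 2 * k \<and> lpoint p (length p) = (k, k) \<and>
      (\<forall>i \<le> length p. fst (lpoint p i) \<le> snd (lpoint p i))}"

text \<open>Area: number of unit squares [x,x+1] x [j,j+1] lying below the path
  (i.e. below some EAST step of the path in column x, which runs at height y, so j+1 \<le> y)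
  and completely above the diagonal (x+1 \<le> j).\<close>
definition area :: "bool list \<Rightarrow> nat" where
  "area p = card {(x, j). \<exists>i < length p. \<not> p ! i \<and> x = fst (lpoint p i) \<and>
                   x < j \<and> j < snd (lpoint p i)}"

definition qCatalan :: "nat \<Rightarrow> 'a::comm_ring_1 \<Rightarrow> 'a" where
  "qCatalan k q = (\<Sum>P\<in>dyck_paths k. q ^ area P)"

text \<open>T_k with 0-based lists: b ! (i-1) = b_i, t ! (i-1) = t_i.\<close>
definition Tset :: "nat \<Rightarrow> (nat list \<times> nat list) set" where
  "Tset k = {(b, t). length b = k \<and> length t = k \<and>
      set b \<union> set t = {1..2*k} \<and>
      sorted_wrt (>) b \<and> sorted_wrt (>) t \<and>
      (\<forall>i < k. t ! i < b ! i)}"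

definition word :: "nat list \<Rightarrow> nat list \<Rightarrow> nat list" where
  "word b t = concat (map (\<lambda>i. [b ! i, t ! i]) (rev [0..<length b]))"

end

theory Submission
  imports Defs
begin

text \<open>
  For a pair (b, t) of decreasing rows partitioning {1..2k}, let the lattice path
  read 1, 2, ..., 2k in increasing order and step NORTH at entries of the top row t and EAST
  at entries of the bottom row b. The column condition t_i < b_i is exactly the ballot
  condition, so this is a bijection from T_k onto the Dyck paths of length k (the path
  determines t, hence b). Two counts then agree with the pair (i, j), i < j, t_i < b_j as
  common currency (the crossing pairs):
  (1) the reading word b_k t_k ... b_1 t_1 has k + #crossing pairs inversions, by induction
      on the columns, each new column contributing b_1 > t_1 and one inversion for every
      earlier bottom entry above t_1;
  (2) the area of the path equals the number of crossing pairs, the pair (i, j) corresponding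
      to the unit square in column k - (j+1), row k - (i+1) under the EAST step of b_j.
\<close>

section \<open>Inversions of the column reading word\<close>

definition cross_pairs :: "nat list \<Rightarrow> nat list \<Rightarrow> (nat \<times> nat) set" where
  "cross_pairs b t = {(i, j). i < j \<and> j < length b \<and> t ! i < b ! j}"

lemma finite_cross_pairs: "finite (cross_pairs b t)"
  by (rule finite_subset[of _ "{..<length b} \<times> {..<length b}"]) (auto simp: cross_pairs_def)

lemma inv_snoc: "inv (xs @ [y]) = inv xs + length (filter (\<lambda>z. y < z) xs)"
proof -
  let ?n = "length xs"
  let ?A = "{(i, j). i < j \<and> j < ?n \<and> xs ! i > xs ! j}"
  let ?B = "(\<lambda>i. (i, ?n)) ` {i. i < ?n \<and> y < xs ! i}"
  have split: "{(i, j). i < j \<and> j < length (xs @ [y]) \<and> (xs @ [y]) ! i > (xs @ [y]) ! j}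
      = ?A \<union> ?B"
    by (auto simp: nth_append less_Suc_eq split: if_splits)
  have "finite ?A" by (rule finite_subset[of _ "{..<?n} \<times> {..<?n}"]) auto
  then have "inv (xs @ [y]) = card ?A + card ?B"
    unfolding inv_def split by (intro card_Un_disjoint) auto
  moreover have "card ?B = card {i. i < ?n \<and> y < xs ! i}"
    by (rule card_image) (auto simp: inj_on_def)
  ultimately show ?thesis by (simp add: inv_def length_filter_conv_card)
qed

lemma word_Cons: "word (x # b) (y # t) = word b t @ [x, y]"
proof -
  have "rev [0..<Suc (length b)] = map Suc (rev [0..<length b]) @ [0]"
    by (simp add: upt_conv_Cons map_Suc_upt[symmetric] rev_map del: upt_Suc)
  then show ?thesis by (simp add: word_def comp_def del: upt_Suc)
qed

lemma length_filter_word: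
  "length b = length t \<Longrightarrow>
   length (filter P (word b t)) = length (filter P b) + length (filter P t)"
proof (induction b arbitrary: t)
  case Nil then show ?case by (simp add: word_def)
next
  case (Cons x b)
  then show ?case by (cases t) (auto simp: word_Cons)
qed

text \<open>The letters of a new column (x over y), both larger than everything before,
  contribute one inversion (x before y) plus one for each earlier letter above y,
  which can only be a bottom-row letter.\<close>
lemma inv_word_Cons:
  assumes len: "length b = length t"
    and b_less: "\<forall>z\<in>set b. z < x" and t_less: "\<forall>z\<in>set t. z < y" and "y < x"
  shows "inv (word (x # b) (y # t)) = inv (word b t) + 1 + card {j. j < length b \<and> y < b ! j}"
proof -
  have "filter (\<lambda>z. x < z) b = []" "filter (\<lambda>z. x < z) t = []"
    using b_less t_less \<open>y < x\<close> by (auto simp: filter_empty_conv)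
  then have above_x: "length (filter (\<lambda>z. x < z) (word b t)) = 0"
    using length_filter_word[OF len] by simp
  have "filter (\<lambda>z. y < z) t = []"
    using t_less by (auto simp: filter_empty_conv)
  then have "length (filter (\<lambda>z. y < z) (word b t)) = length (filter (\<lambda>z. y < z) b)"
    using length_filter_word[OF len] by simp
  then have above_y: "length (filter (\<lambda>z. y < z) (word b t)) = card {j. j < length b \<and> y < b ! j}"
    by (simp add: length_filter_conv_card)
  show ?thesis
    using inv_snoc[of "word b t @ [x]" y] inv_snoc[of "word b t" x] above_x above_y \<open>y < x\<close>
    by (simp add: word_Cons)
qed

text \<open>Crossing pairs of the extended filling: those involving the new column
  (index 0 in the top row) and the shifted old ones.\<close>
lemma card_cross_pairs_Cons:
  "card (cross_pairs (x # b) (y # t)) = card {j. j < length b \<and> y < b ! j} + card (cross_pairs b t)"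
proof -
  let ?C = "{j. j < length b \<and> y < b ! j}"
  let ?new = "(\<lambda>j. (0::nat, Suc j)) ` ?C"
  let ?old = "(\<lambda>(i, j). (Suc i, Suc j)) ` cross_pairs b t"
  have split: "cross_pairs (x # b) (y # t) = ?new \<union> ?old"
  proof (rule set_eqI, clarify)
    fix i j
    show "((i, j) \<in> cross_pairs (x # b) (y # t)) = ((i, j) \<in> ?new \<union> ?old)"
      by (cases i; cases j) (auto simp: cross_pairs_def image_iff)
  qed
  have "card (?new \<union> ?old) = card ?new + card ?old"
    by (intro card_Un_disjoint) (use finite_cross_pairs[of b t] in auto)
  also have "\<dots> = card ?C + card (cross_pairs b t)"
    by (subst card_image, simp add: inj_on_def)+ (auto simp: inj_on_def)
  finally show ?thesis by (simp add: split)
qed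

lemma inv_word:
  "length b = length t \<Longrightarrow> sorted_wrt (>) b \<Longrightarrow> sorted_wrt (>) t \<Longrightarrow>
   (\<forall>i<length b. t ! i < b ! i) \<Longrightarrow> inv (word b t) = length b + card (cross_pairs b t)"
proof (induction b arbitrary: t)
  case Nil then show ?case by (simp add: word_def inv_def cross_pairs_def)
next
  case (Cons x b)
  then obtain y t' where t: "t = y # t'" by (cases t) auto
  have columns: "\<forall>i<length b. t' ! i < b ! i"
    using Cons.prems(4) t by auto
  have "inv (word b t') = length b + card (cross_pairs b t')"
    using Cons.IH[OF _ _ _ columns] Cons.prems t by simp
  moreover have "inv (word (x # b) t) = inv (word b t') + 1 + card {j. j < length b \<and> y < b ! j}"
    using inv_word_Cons[of b t' x y] Cons.prems t by auto
  ultimately show ?case by (simp add: t card_cross_pairs_Cons)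
qed

section \<open>Counting in strictly decreasing lists\<close>

text \<open>If P is downward closed, the indices i with P (xs ! i) in a strictly decreasing list
  form a final segment; so P (xs ! j) holds exactly when j lies in the last c positions,
  c being the number of such indices.\<close>
lemma decreasing_count_iff:
  fixes xs :: "nat list"
  assumes dec: "sorted_wrt (>) xs" and down: "\<And>x y. x \<le> y \<Longrightarrow> P y \<Longrightarrow> P x"
    and j: "j < length xs"
  shows "P (xs ! j) \<longleftrightarrow> length xs - card {i. i < length xs \<and> P (xs ! i)} \<le> j"
proof -
  let ?S = "{i. i < length xs \<and> P (xs ! i)}"
  have mono: "xs ! i \<le> xs ! i'" if "i' \<le> i" "i < length xs" for i i'
    using that dec sorted_wrt_nth_less[of "(>)" xs i' i] by (cases "i = i'") auto
  show ?thesis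
  proof
    assume "P (xs ! j)"
    then have "{j..<length xs} \<subseteq> ?S"
      using mono down \<open>P (xs ! j)\<close> by auto blast
    from card_mono[OF _ this] show "length xs - card ?S \<le> j" by simp
  next
    assume count: "length xs - card ?S \<le> j"
    show "P (xs ! j)"
    proof (rule ccontr)
      assume "\<not> P (xs ! j)"
      then have "?S \<subseteq> {Suc j..<length xs}"
        using mono down j \<open>\<not> P (xs ! j)\<close> by (auto simp: not_less_eq_eq[symmetric]) blast
      from card_mono[OF _ this] count j show False by simp
    qed
  qed
qed

lemma sorted_gt_distinct: "sorted_wrt (>) (xs :: nat list) \<Longrightarrow> distinct xs"
  by (auto simp: distinct_conv_nth sorted_wrt_iff_nth_less) (metis less_irrefl linorder_neqE_nat)

lemma sorted_gt_eq:
  fixes xs ys :: "nat list"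
  assumes "sorted_wrt (>) xs" "sorted_wrt (>) ys" "set xs = set ys"
  shows "xs = ys"
proof -
  have "rev xs = rev ys"
    by (rule strict_sorted_equal) (use assms in \<open>simp_all add: sorted_wrt_rev\<close>)
  then show ?thesis by simp
qed

lemma card_set_filter:
  assumes "distinct xs"
  shows "card {u \<in> set xs. P u} = card {i. i < length xs \<and> P (xs ! i)}"
proof -
  have "{u \<in> set xs. P u} = (\<lambda>i. xs ! i) ` {i. i < length xs \<and> P (xs ! i)}"
    by (auto simp: in_set_conv_nth)
  moreover have "inj_on (\<lambda>i. xs ! i) {i. i < length xs \<and> P (xs ! i)}"
    using assms by (auto simp: inj_on_def nth_eq_iff_index_eq)
  ultimately show ?thesis by (simp add: card_image)
qed

section \<open>The lattice path of a two-row array\<close>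

text \<open>Reading the numbers 1, ..., 2k in increasing order, step n is NORTH iff n + 1 lies
  in the top row t and EAST iff it lies in the bottom row b.\<close>
definition top_row_path :: "nat \<Rightarrow> nat list \<Rightarrow> bool list" where
  "top_row_path k t = map (\<lambda>n. Suc n \<in> set t) [0..<2 * k]"

lemma length_top_row_path [simp]: "length (top_row_path k t) = 2 * k"
  by (simp add: top_row_path_def)

definition area_cells :: "bool list \<Rightarrow> (nat \<times> nat) set" where
  "area_cells p = {(x, j). \<exists>i < length p. \<not> p ! i \<and> x = fst (lpoint p i) \<and>
                   x < j \<and> j < snd (lpoint p i)}"

lemma area_eq_card_cells: "area p = card (area_cells p)"
  by (simp add: area_def area_cells_def)

text \<open>Two decreasing rows of length k partitioning {1..2k}; the column condition t_i < b_i
  is deliberately not assumed, since it is exactly what the Dyck condition will encode.\<close>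
locale two_row_array =
  fixes k :: nat and b t :: "nat list"
  assumes len_b: "length b = k" and len_t: "length t = k"
    and rows_cover: "set b \<union> set t = {1..2*k}"
    and dec_b: "sorted_wrt (>) b" and dec_t: "sorted_wrt (>) t"
begin

lemma rows_disjoint: "set b \<inter> set t = {}"
proof -
  have "card (set b) = k" "card (set t) = k"
    using sorted_gt_distinct[OF dec_b] sorted_gt_distinct[OF dec_t] len_b len_t
    by (simp_all add: distinct_card)
  moreover have "card (set b) + card (set t) = card (set b \<union> set t) + card (set b \<inter> set t)"
    by (rule card_Un_Int) auto
  ultimately have "card (set b \<inter> set t) = 0" using rows_cover by simp
  then show ?thesis by simp
qed

lemma mem_b_iff: "u \<in> set b \<longleftrightarrow> u \<in> {1..2*k} \<and> u \<notin> set t"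
  using rows_cover rows_disjoint by blast

lemma set_t_range: "set t \<subseteq> {1..2*k}"
  using rows_cover by blast

lemma b_range: "i < k \<Longrightarrow> b ! i \<in> {1..2*k}"
  using rows_cover len_b by (metis UnI1 nth_mem)

lemma t_range: "i < k \<Longrightarrow> t ! i \<in> {1..2*k}"
  using set_t_range len_t by (metis nth_mem subsetD)

lemma b_le_iff: "j < k \<Longrightarrow> b ! j \<le> m \<longleftrightarrow> k - card {i. i < k \<and> b ! i \<le> m} \<le> j"
  using decreasing_count_iff[OF dec_b, of "\<lambda>z. z \<le> m"] len_b by simp

lemma t_le_iff: "j < k \<Longrightarrow> t ! j \<le> m \<longleftrightarrow> k - card {i. i < k \<and> t ! i \<le> m} \<le> j"
  using decreasing_count_iff[OF dec_t, of "\<lambda>z. z \<le> m"] len_t by simp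

lemma t_less_iff: "j < k \<Longrightarrow> t ! j < m \<longleftrightarrow> k - card {i. i < k \<and> t ! i < m} \<le> j"
  using decreasing_count_iff[OF dec_t, of "\<lambda>z. z < m"] len_t by simp

lemma card_indices_le: "card {i. i < k \<and> P i} \<le> k"
  by (rule order_trans[OF card_mono[of "{..<k}"]]) auto

lemma lpoint_top_row_path:
  assumes n: "n \<le> 2 * k"
  shows "lpoint (top_row_path k t) n =
         (card {i. i < k \<and> b ! i \<le> n}, card {i. i < k \<and> t ! i \<le> n})"
proof -
  have prefix: "take n (top_row_path k t) = map (\<lambda>m. Suc m \<in> set t) [0..<n]"
    using n by (simp add: top_row_path_def take_map)
  have east: "{u \<in> set b. u \<le> n} = Suc ` {m. m < n \<and> Suc m \<notin> set t}"
  proof (rule set_eqI)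
    fix u show "u \<in> {u \<in> set b. u \<le> n} \<longleftrightarrow> u \<in> Suc ` {m. m < n \<and> Suc m \<notin> set t}"
      using n by (cases u) (auto simp: mem_b_iff)
  qed
  have north: "{u \<in> set t. u \<le> n} = Suc ` {m. m < n \<and> Suc m \<in> set t}"
  proof (rule set_eqI)
    fix u show "u \<in> {u \<in> set t. u \<le> n} \<longleftrightarrow> u \<in> Suc ` {m. m < n \<and> Suc m \<in> set t}"
      using n set_t_range by (cases u) auto
  qed
  have "length (filter Not (take n (top_row_path k t))) = card {u \<in> set b. u \<le> n}"
    unfolding prefix east
    by (simp add: filter_map comp_def length_filter_conv_card card_image cong: conj_cong)
  moreover have "length (filter id (take n (top_row_path k t))) = card {u \<in> set t. u \<le> n}"
    unfolding prefix north
    by (simp add: filter_map comp_def length_filter_conv_card card_image cong: conj_cong)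
  ultimately show ?thesis
    using card_set_filter[OF sorted_gt_distinct[OF dec_b]]
      card_set_filter[OF sorted_gt_distinct[OF dec_t]] len_b len_t
    by (simp add: lpoint_def)
qed

lemma columns_imp_ballot:
  assumes columns: "\<forall>i<k. t ! i < b ! i"
  shows "card {i. i < k \<and> b ! i \<le> m} \<le> card {i. i < k \<and> t ! i \<le> m}"
proof -
  define e where "e = card {i. i < k \<and> b ! i \<le> m}"
  have "e \<le> k" unfolding e_def by (rule card_indices_le)
  show ?thesis
  proof (cases "e = 0")
    case False
    then have j: "k - e < k" using \<open>e \<le> k\<close> by simp
    then have "b ! (k - e) \<le> m" using b_le_iff by (simp add: e_def)
    then have "t ! (k - e) \<le> m" using columns j by (meson less_imp_le order_trans)
    then have "k - card {i. i < k \<and> t ! i \<le> m} \<le> k - e" using t_le_iff j by blast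
    then show ?thesis
      using \<open>e \<le> k\<close> card_indices_le[of "\<lambda>i. t ! i \<le> m"] by (simp add: e_def)
  qed (simp add: e_def[symmetric])
qed

text \<open>Conversely the ballot condition forces t_j < b_j: apply it at m = b_j.\<close>
lemma ballot_imp_columns:
  assumes ballot: "\<forall>m\<le>2*k. card {i. i < k \<and> b ! i \<le> m} \<le> card {i. i < k \<and> t ! i \<le> m}"
  shows "\<forall>i<k. t ! i < b ! i"
proof (intro allI impI)
  fix j assume j: "j < k"
  have "k - card {i. i < k \<and> b ! i \<le> b ! j} \<le> j" using b_le_iff[OF j, of "b ! j"] by simp
  moreover have "card {i. i < k \<and> b ! i \<le> b ! j} \<le> card {i. i < k \<and> t ! i \<le> b ! j}"
    using ballot b_range[OF j] by simp
  ultimately have "t ! j \<le> b ! j" using t_le_iff[OF j, of "b ! j"] by simp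
  moreover have "t ! j \<noteq> b ! j"
    using rows_disjoint len_b len_t j by (metis disjoint_iff nth_mem)
  ultimately show "t ! j < b ! j" by simp
qed

text \<open>The path ends at (k, k).\<close>
lemma card_all_entries:
  "card {i. i < k \<and> b ! i \<le> 2 * k} = k" "card {i. i < k \<and> t ! i \<le> 2 * k} = k"
proof -
  have "{i. i < k \<and> b ! i \<le> 2 * k} = {..<k}" "{i. i < k \<and> t ! i \<le> 2 * k} = {..<k}"
    using b_range t_range by auto
  then show "card {i. i < k \<and> b ! i \<le> 2 * k} = k" "card {i. i < k \<and> t ! i \<le> 2 * k} = k"
    by simp_all
qed

lemma dyck_iff_columns: "top_row_path k t \<in> dyck_paths k \<longleftrightarrow> (\<forall>i<k. t ! i < b ! i)"
proof
  assume "top_row_path k t \<in> dyck_paths k"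
  then have "\<forall>m\<le>2*k. fst (lpoint (top_row_path k t) m) \<le> snd (lpoint (top_row_path k t) m)"
    by (simp add: dyck_paths_def)
  then show "\<forall>i<k. t ! i < b ! i"
    using lpoint_top_row_path by (intro ballot_imp_columns) simp
next
  assume "\<forall>i<k. t ! i < b ! i"
  then show "top_row_path k t \<in> dyck_paths k"
    using columns_imp_ballot
    by (simp add: dyck_paths_def lpoint_top_row_path card_all_entries)
qed

lemma east_step_iff: "n < 2 * k \<Longrightarrow> \<not> top_row_path k t ! n \<longleftrightarrow> (\<exists>j<k. b ! j = Suc n)"
proof -
  assume "n < 2 * k"
  then have "\<not> top_row_path k t ! n \<longleftrightarrow> Suc n \<in> set b"
    by (simp add: top_row_path_def mem_b_iff)
  then show ?thesis using len_b by (auto simp: in_set_conv_nth)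
qed

lemma lpoint_before_east:
  assumes j: "j < k"
  shows "lpoint (top_row_path k t) (b ! j - 1) = (k - Suc j, card {i. i < k \<and> t ! i < b ! j})"
proof -
  have bj: "1 \<le> b ! j" "b ! j \<le> 2 * k" using b_range[OF j] by auto
  have "b ! i < b ! j \<longleftrightarrow> j < i" if "i < k" for i
    using dec_b len_b j that by (metis linorder_neqE_nat not_less_iff_gr_or_eq sorted_wrt_nth_less)
  then have "{i. i < k \<and> b ! i < b ! j} = {Suc j..<k}" by auto
  moreover have "{i. i < k \<and> b ! i \<le> b ! j - 1} = {i. i < k \<and> b ! i < b ! j}" using bj by auto
  ultimately have "{i. i < k \<and> b ! i \<le> b ! j - 1} = {Suc j..<k}" by simp
  moreover have "{i. i < k \<and> t ! i \<le> b ! j - 1} = {i. i < k \<and> t ! i < b ! j}" using bj by auto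
  ultimately show ?thesis using lpoint_top_row_path[of "b ! j - 1"] bj by simp
qed

lemma cell_of_cross_pair:
  assumes "(i, j) \<in> cross_pairs b t"
  shows "(k - Suc j, k - Suc i) \<in> area_cells (top_row_path k t)"
proof -
  have ij: "i < j" "j < k" "t ! i < b ! j" using assms len_b by (auto simp: cross_pairs_def)
  define n where "n = b ! j - 1"
  have bj: "1 \<le> b ! j" "b ! j \<le> 2 * k" using b_range[OF ij(2)] by auto
  then have n: "n < 2 * k" "\<not> top_row_path k t ! n"
    using east_step_iff ij(2) by (auto simp: n_def)
  have "k - card {i. i < k \<and> t ! i < b ! j} \<le> i" using t_less_iff ij by simp
  then show ?thesis
    using n ij lpoint_before_east[OF ij(2)] unfolding area_cells_def n_def by force
qed

lemma cross_pair_of_cell: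
  assumes "(x, y) \<in> area_cells (top_row_path k t)"
  shows "\<exists>i j. (i, j) \<in> cross_pairs b t \<and> x = k - Suc j \<and> y = k - Suc i"
proof -
  obtain n where n: "n < 2 * k" "\<not> top_row_path k t ! n" "x = fst (lpoint (top_row_path k t) n)"
      "x < y" "y < snd (lpoint (top_row_path k t) n)"
    using assms by (auto simp: area_cells_def)
  obtain j where j: "j < k" "b ! j = Suc n" using east_step_iff n by auto
  let ?c = "card {i. i < k \<and> t ! i < b ! j}"
  have xy: "x = k - Suc j" "y < ?c"
    using n lpoint_before_east[OF j(1)] j by auto
  have "?c \<le> k" by (rule card_indices_le)
  define i where "i = k - Suc y"
  have "i < j" "i < k" using xy n(4) \<open>?c \<le> k\<close> by (auto simp: i_def)
  moreover have "t ! i < b ! j" using t_less_iff[OF \<open>i < k\<close>] xy \<open>?c \<le> k\<close> by (simp add: i_def)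
  ultimately have "(i, j) \<in> cross_pairs b t" using j(1) len_b by (simp add: cross_pairs_def)
  moreover have "y = k - Suc i" using xy \<open>?c \<le> k\<close> by (simp add: i_def)
  ultimately show ?thesis using xy by blast
qed

lemma area_top_row_path: "area (top_row_path k t) = card (cross_pairs b t)"
proof -
  let ?f = "\<lambda>(i, j). (k - Suc j, k - Suc i)"
  have "area_cells (top_row_path k t) = ?f ` cross_pairs b t"
    using cell_of_cross_pair cross_pair_of_cell by fastforce
  moreover have "inj_on ?f (cross_pairs b t)"
    using len_b by (auto simp: inj_on_def cross_pairs_def)
  ultimately show ?thesis by (simp add: area_eq_card_cells card_image)
qed

lemma mem_t_iff_north: "u \<in> set t \<longleftrightarrow> u \<in> {1..2*k} \<and> top_row_path k t ! (u - 1)"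
proof (cases "u \<in> {1..2*k}")
  case True
  then have "u - 1 < 2 * k" by auto
  then show ?thesis using True by (simp add: top_row_path_def)
qed (use set_t_range in blast)

lemma set_b_eq: "set b = {1..2*k} - set t"
  using mem_b_iff by blast

end

section \<open>Standard two-row arrays correspond to Dyck paths\<close>

lemma two_row_array_of_Tset: "(b, t) \<in> Tset k \<Longrightarrow> two_row_array k b t"
  unfolding Tset_def by unfold_locales auto

lemma columns_of_Tset: "(b, t) \<in> Tset k \<Longrightarrow> \<forall>i<k. t ! i < b ! i"
  unfolding Tset_def by auto

text \<open>The path records the top row, and the top row determines the bottom row.\<close>
lemma inj_on_top_row_path: "inj_on (\<lambda>(b, t). top_row_path k t) (Tset k)"
proof (rule inj_onI, clarify)
  fix b t b' t'
  assume A: "(b, t) \<in> Tset k" and A': "(b', t') \<in> Tset k"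
    and same_path: "top_row_path k t = top_row_path k t'"
  interpret X: two_row_array k b t by (rule two_row_array_of_Tset[OF A])
  interpret Y: two_row_array k b' t' by (rule two_row_array_of_Tset[OF A'])
  have "set t = set t'"
    by (rule set_eqI) (simp only: X.mem_t_iff_north Y.mem_t_iff_north same_path)
  moreover from this have "set b = set b'"
    using X.set_b_eq Y.set_b_eq by simp
  ultimately show "b = b' \<and> t = t'"
    using sorted_gt_eq[OF X.dec_b Y.dec_b] sorted_gt_eq[OF X.dec_t Y.dec_t] by simp
qed

text \<open>Conversely every Dyck path comes from a standard array: put the positions of its
  NORTH steps (shifted by one) into the top row and the rest into the bottom row.\<close>
lemma array_of_dyck_path:
  assumes p: "p \<in> dyck_paths k"
  shows "\<exists>b t. (b, t) \<in> Tset k \<and> top_row_path k t = p"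
proof -
  have len_p: "length p = 2 * k" and endpoint: "lpoint p (2 * k) = (k, k)"
    using p by (auto simp: dyck_paths_def)
  define T where "T = {u \<in> {1..2*k}. p ! (u - 1)}"
  define t where "t = rev (sorted_list_of_set T)"
  define b where "b = rev (sorted_list_of_set ({1..2*k} - T))"
  have set_t: "set t = T" and set_b: "set b = {1..2*k} - T"
    by (auto simp: t_def b_def T_def)
  have "T = Suc ` {i. i < 2 * k \<and> p ! i}"
    by (rule set_eqI) (case_tac x; auto simp: T_def)
  then have "card T = length (filter id p)"
    using len_p by (simp add: card_image length_filter_conv_card)
  also have "\<dots> = k" using endpoint len_p by (simp add: lpoint_def)
  finally have card_T: "card T = k" .
  have "T \<subseteq> {1..2*k}" by (auto simp: T_def)
  then have "card ({1..2*k} - T) = k"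
    using card_T finite_subset[OF \<open>T \<subseteq> {1..2*k}\<close>] by (simp add: card_Diff_subset)
  then have lengths: "length t = k" "length b = k"
    using card_T by (simp_all add: t_def b_def)
  have decreasing: "sorted_wrt (>) t" "sorted_wrt (>) b"
    by (simp_all add: t_def b_def sorted_wrt_rev strict_sorted_list_of_set)
  have cover: "set b \<union> set t = {1..2*k}" using set_t set_b by (auto simp: T_def)
  interpret X: two_row_array k b t by unfold_locales (use lengths cover decreasing in auto)
  have path: "top_row_path k t = p"
    by (rule nth_equalityI) (simp_all add: len_p top_row_path_def set_t T_def)
  have "(b, t) \<in> Tset k"
    using lengths cover decreasing X.dyck_iff_columns path p by (simp add: Tset_def)
  with path show ?thesis by blast
qed

lemma image_top_row_path: "(\<lambda>(b, t). top_row_path k t) ` Tset k = dyck_paths k"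
proof
  show "(\<lambda>(b, t). top_row_path k t) ` Tset k \<subseteq> dyck_paths k"
  proof clarify
    fix b t assume A: "(b, t) \<in> Tset k"
    interpret X: two_row_array k b t by (rule two_row_array_of_Tset[OF A])
    show "top_row_path k t \<in> dyck_paths k"
      using X.dyck_iff_columns columns_of_Tset[OF A] by simp
  qed
  show "dyck_paths k \<subseteq> (\<lambda>(b, t). top_row_path k t) ` Tset k"
    using array_of_dyck_path by fastforce
qed

theorem mainTheorem1:
  fixes k :: nat and q :: "'a::comm_ring_1"
  shows "(\<Sum>(b, t)\<in>Tset k. q ^ inv (word b t)) = q ^ k * qCatalan k q"
proof -
  have inv_area: "inv (word b t) = k + area (top_row_path k t)" if A: "(b, t) \<in> Tset k" for b t
  proof -
    interpret X: two_row_array k b t by (rule two_row_array_of_Tset[OF A])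
    show ?thesis
      using inv_word[of b t] X.len_b X.len_t X.dec_b X.dec_t columns_of_Tset[OF A]
        X.area_top_row_path by simp
  qed
  have "(\<Sum>(b, t)\<in>Tset k. q ^ inv (word b t)) = (\<Sum>(b, t)\<in>Tset k. q ^ k * q ^ area (top_row_path k t))"
    by (rule sum.cong) (auto simp: inv_area power_add)
  also have "\<dots> = q ^ k * (\<Sum>(b, t)\<in>Tset k. q ^ area (top_row_path k t))"
    by (simp add: sum_distrib_left case_prod_beta)
  also have "(\<Sum>(b, t)\<in>Tset k. q ^ area (top_row_path k t)) = (\<Sum>P\<in>dyck_paths k. q ^ area P)"
    by (rule sym, rule sum.reindex_cong[OF inj_on_top_row_path image_top_row_path[symmetric]]) auto
  finally show ?thesis by (simp add: qCatalan_def)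
qed

end
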